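(* There exist constants $\alpha_0\in(0,1)$ and $c^-,c^+\in(0,\infty)$ such that, with $d_0(N)=\lfloor\alpha_0N/\log N\rfloor$, the following holds: for every nonempty $A\subset\mathcal S_N$ with $2^{|A|}\le d_0(N)$, every $\sigma\in\mathcal S_N\setminus A$ and every $\eta\in A$, $$\frac{1}{|A|}\Bigl(1-\frac{c^-}{(\log N)^2}\Bigr)\le \mathbb P\bigl(\tau^\sigma_\eta<\tau^\sigma_{A\setminus\{\eta\}}\bigr)\le\frac{1}{|A|}\Bigl(1+\frac{c^+}{(\log N)^2}\Bigr).$$
   Context: $\mathcal S_N=\{-1,1\}^N$. $(\sigma_N(t))_{t\in\mathbb N}$ is the discrete-time simple random walk on $\mathcal S_N$: from $\sigma$ it jumps to each of the $N$ points at Hamming distance $1$ with probability $1/N$. For $B\subset\mathcal S_N$, $\tau^\sigma_B=\inf\{t>0:\sigma_N(t)\in B\}$ for the walk started at $\sigma$, with $\tau^\sigma_\eta=\tau^\sigma_{\{\eta\}}$ and $\tau^\sigma_\emptyset=+\infty$. *)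

theory Defs
  imports Complex_Main
begin

text \<open>The hypercube S_N = {-1,1}^N is encoded as Pow {..<N}: a configuration
  is identified with the set of coordinates equal to -1. Two configurations are at
  Hamming distance 1 iff their symmetric difference is a singleton.\<close>

definition cube :: "nat \<Rightarrow> nat set set" where
  "cube N = Pow {..<N}"

definition hamming :: "nat set \<Rightarrow> nat set \<Rightarrow> nat" where
  "hamming x y = card ((x - y) \<union> (y - x))"

definition trans_prob :: "nat \<Rightarrow> nat set \<Rightarrow> nat set \<Rightarrow> real" where
  "trans_prob N x y = (if hamming x y = 1 then 1 / real N else 0)"

text \<open>avoid_prob N B s n y = P(X_n = y and X_t \<notin> B for all 1 \<le> t \<le> n),
  for the walk started at X_0 = s.\<close>
fun avoid_prob :: "nat \<Rightarrow> nat set set \<Rightarrow> nat set \<Rightarrow> nat \<Rightarrow> nat set \<Rightarrow> real" where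
  "avoid_prob N B s 0 y = (if y = s then 1 else 0)"
| "avoid_prob N B s (Suc n) y =
     (if y \<in> B then 0
      else (\<Sum>x\<in>cube N. avoid_prob N B s n x * trans_prob N x y))"

text \<open>first_hit_prob N B s e = P(tau^s_e < tau^s_B) for e \<notin> B, i.e.
  the sum over n of P(X_{n+1} = e and X_t \<notin> B \<union> {e} for 1 \<le> t \<le> n).\<close>
definition first_hit_prob :: "nat \<Rightarrow> nat set set \<Rightarrow> nat set \<Rightarrow> nat set \<Rightarrow> real" where
  "first_hit_prob N B s e =
     (\<Sum>n. \<Sum>x\<in>cube N. avoid_prob N (insert e B) s n x * trans_prob N x e)"

end

(*
  Write \<phi>(d) = radial_potential N d. Off a fixed vertex b the process \<phi>(dist(X_n, b)) - n is a
  martingale, so optional stopping at the hitting time \<tau> of a set A containing b gives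
  \<Sum>_{a \<in> A} \<phi>(dist(a, b)) P(X_\<tau> = a) = E \<tau> + \<phi>(dist(\<sigma>, b)).
  Since \<phi>(0) \<ge> 2^N - 1 while 0 \<le> \<phi>(d) \<le> \<phi>(1) = O(2^N/N) for d \<ge> 1, this pins
  \<phi>(0) P(X_\<tau> = b) to E \<tau> up to \<phi>(1), for every b \<in> A. Summing over b shows that
  P(X_\<tau> = \<eta>) = 1/|A| + O(1/N), and the hypothesis on |A| gives |A| \<le> 2 log N, so that
  O(1/N) = O(1/(|A| log^2 N)).
*)
theory Submission
  imports Defs
begin

section \<open>The radial potential\<close>

definition binom_tail :: "nat \<Rightarrow> nat \<Rightarrow> real" where
  "binom_tail N d = (\<Sum>m\<in>{Suc d..N}. real (N choose m))"

definition radial_increment :: "nat \<Rightarrow> nat \<Rightarrow> real" where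
  "radial_increment N d = binom_tail N d / real ((N - 1) choose d)"

text \<open>For \<open>d \<ge> 1\<close>, \<open>radial_potential N 0 - radial_potential N d\<close> is the mean time the walk
  needs to hit a fixed vertex from Hamming distance \<open>d\<close>; only the Poisson equation
  \<open>radial_potential_harmonic\<close> is used.\<close>
definition radial_potential :: "nat \<Rightarrow> nat \<Rightarrow> real" where
  "radial_potential N d = (\<Sum>i\<in>{d..<N}. radial_increment N i)"

lemma binom_tail_nonneg: "0 \<le> binom_tail N d"
  unfolding binom_tail_def by (auto intro: sum_nonneg)

lemma radial_increment_nonneg: "0 \<le> radial_increment N d"
  unfolding radial_increment_def using binom_tail_nonneg by simp

lemma radial_potential_nonneg: "0 \<le> radial_potential N d"
  unfolding radial_potential_def using radial_increment_nonneg by (auto intro: sum_nonneg)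

lemma radial_potential_antimono: "d \<le> d' \<Longrightarrow> radial_potential N d' \<le> radial_potential N d"
  unfolding radial_potential_def by (rule sum_mono2) (auto simp: radial_increment_nonneg)

lemma radial_potential_Suc:
  "d < N \<Longrightarrow> radial_potential N d = radial_increment N d + radial_potential N (Suc d)"
  unfolding radial_potential_def by (simp add: sum.atLeast_Suc_lessThan)

lemma radial_potential_eq_0: "N \<le> d \<Longrightarrow> radial_potential N d = 0"
  unfolding radial_potential_def by simp

lemma binom_tail_pred:
  assumes "1 \<le> d" "d \<le> N"
  shows "binom_tail N (d - 1) = real (N choose d) + binom_tail N d"
proof -
  have "{Suc (d - 1)..N} = insert d {Suc d..N}" using assms by auto
  thus ?thesis unfolding binom_tail_def by simp
qed

lemma binom_tail_0: "binom_tail N 0 = 2 ^ N - 1"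
proof -
  have "{..N} = insert 0 {Suc 0..N}" by auto
  hence "(\<Sum>m\<le>N. real (N choose m)) = 1 + binom_tail N 0" by (simp add: binom_tail_def)
  moreover have "(\<Sum>m\<le>N. real (N choose m)) = 2 ^ N"
    using choose_row_sum[of N] by (metis of_nat_numeral of_nat_power of_nat_sum)
  ultimately show ?thesis by simp
qed

lemma binom_tail_le: "binom_tail N d \<le> 2 ^ N"
proof -
  have "binom_tail N d \<le> binom_tail N 0"
    unfolding binom_tail_def by (rule sum_mono2) auto
  thus ?thesis by (simp add: binom_tail_0)
qed

text \<open>By the absorption identities the two products are \<open>N binom_tail N (d - 1) / (N choose d)\<close>
  and \<open>N binom_tail N d / (N choose d)\<close>, and the two tails differ by \<open>N choose d\<close>.\<close>
lemma radial_increment_diff: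
  assumes "1 \<le> d" "d \<le> N"
  shows "real d * radial_increment N (d - 1) - real (N - d) * radial_increment N d = real N"
proof -
  have choose_pos: "0 < real (N choose d)" using assms by simp
  have lower: "real d * radial_increment N (d - 1) = real N * binom_tail N (d - 1) / real (N choose d)"
  proof -
    have "N * ((N - 1) choose (d - 1)) = d * (N choose d)"
      using binomial_absorption[of "d - 1" N] assms by (simp add: mult.commute)
    hence "real N * real ((N - 1) choose (d - 1)) = real d * real (N choose d)"
      by (metis of_nat_mult)
    moreover have "0 < real ((N - 1) choose (d - 1))" using assms by simp
    ultimately show ?thesis
      unfolding radial_increment_def using choose_pos by (simp add: field_simps)
  qed
  have upper: "real (N - d) * radial_increment N d = real N * binom_tail N d / real (N choose d)"
  proof (cases "d = N")
    case True
    then show ?thesis unfolding binom_tail_def by simp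
  next
    case False
    have "(N - d) * (N choose d) = N * ((N - 1) choose d)"
      by (rule binomial_absorb_comp)
    hence "real (N - d) * real (N choose d) = real N * real ((N - 1) choose d)"
      by (metis of_nat_mult)
    moreover have "0 < real ((N - 1) choose d)" using assms False by simp
    ultimately have "real (N - d) / real ((N - 1) choose d) = real N / real (N choose d)"
      using choose_pos by (simp add: divide_simps)
    thus ?thesis unfolding radial_increment_def by (metis times_divide_eq_right mult.commute)
  qed
  have "real d * radial_increment N (d - 1) - real (N - d) * radial_increment N d
      = real N * (binom_tail N (d - 1) - binom_tail N d) / real (N choose d)"
    unfolding lower upper by (simp add: diff_divide_distrib right_diff_distrib)
  also have "\<dots> = real N" using binom_tail_pred[OF assms] choose_pos by simp
  finally show ?thesis .
qed

lemma radial_potential_rec: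
  assumes "1 \<le> d" "d \<le> N"
  shows "real d * radial_potential N (d - 1) + real (N - d) * radial_potential N (Suc d)
    = real N * (radial_potential N d + 1)"
proof -
  have down: "radial_potential N (d - 1) = radial_increment N (d - 1) + radial_potential N d"
    using radial_potential_Suc[of "d - 1" N] assms by simp
  have up: "real (N - d) * radial_potential N (Suc d)
      = real (N - d) * (radial_potential N d - radial_increment N d)"
  proof (cases "d = N")
    case True thus ?thesis by (simp add: radial_potential_eq_0)
  next
    case False thus ?thesis using radial_potential_Suc[of d N] assms by simp
  qed
  have "real d + real (N - d) = real N" using assms by simp
  then show ?thesis
    using down up radial_increment_diff[OF assms] by (simp add: algebra_simps)
qed

lemma radial_potential_0_ge: "2 ^ N - 1 \<le> radial_potential N 0"
proof (cases "N = 0")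
  case True thus ?thesis by (simp add: radial_potential_def)
next
  case False
  hence "radial_potential N 0 = binom_tail N 0 + radial_potential N 1"
    using radial_potential_Suc[of 0 N] by (simp add: radial_increment_def)
  thus ?thesis using radial_potential_nonneg[of N 1] by (simp add: binom_tail_0)
qed

lemma radial_increment_le: "radial_increment N i \<le> 2 ^ N / real ((N - 1) choose i)"
  unfolding radial_increment_def using binom_tail_le by (simp add: divide_right_mono)

lemma choose_two_le_choose:
  assumes "2 \<le> k" "k + 2 \<le> n"
  shows "n choose 2 \<le> n choose k"
proof -
  define k' where "k' = (if n div 2 \<le> k then k else n - k)"
  have "k' \<le> n - 2" and "n div 2 \<le> k'" using assms by (auto simp: k'_def)
  hence "n choose (n - 2) \<le> n choose k'" by (intro binomial_antimono) auto
  moreover have "n choose k = n choose k'"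
    using assms binomial_symmetric[of k n] by (simp add: k'_def)
  moreover have "n choose 2 = n choose (n - 2)" using assms by (intro binomial_symmetric) simp
  ultimately show ?thesis by simp
qed

lemma radial_increment_last: "1 \<le> N \<Longrightarrow> radial_increment N (N - 1) = 1"
  by (simp add: radial_increment_def binom_tail_def)

lemma radial_increment_le_middle:
  assumes "2 \<le> i" "i + 3 \<le> N"
  shows "radial_increment N i \<le> 2 * 2 ^ N / ((real N - 1) * (real N - 2))"
proof -
  have "(N - 1) choose 2 = (N - 1) * (N - 2) div 2"
    using choose_two[of "N - 1"] by (simp add: numeral_2_eq_2)
  moreover have "even ((N - 1) * (N - 2))" by simp
  ultimately have "real ((N - 1) choose 2) = (real N - 1) * (real N - 2) / 2"
    using assms by (simp add: real_of_nat_div of_nat_diff)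
  moreover have "(N - 1) choose 2 \<le> (N - 1) choose i"
    using assms by (intro choose_two_le_choose) auto
  ultimately have "(real N - 1) * (real N - 2) / 2 \<le> real ((N - 1) choose i)"
    by (metis of_nat_le_iff)
  moreover have "0 < (real N - 1) * (real N - 2) / 2" using assms by simp
  ultimately have "2 ^ N / real ((N - 1) choose i) \<le> 2 ^ N / ((real N - 1) * (real N - 2) / 2)"
    by (intro frac_le) auto
  thus ?thesis using radial_increment_le[of N i] by (simp add: mult.commute)
qed

lemma radial_potential_1_eq:
  assumes "5 \<le> N"
  shows "radial_potential N 1 = radial_increment N 1 + (\<Sum>i\<in>{2..<N - 2}. radial_increment N i)
    + radial_increment N (N - 2) + 1"
proof -
  have "radial_potential N 1 = radial_increment N 1 + radial_potential N 2"
    using radial_potential_Suc[of 1 N] assms by (simp add: numeral_2_eq_2)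
  moreover have "radial_potential N 2
      = (\<Sum>i\<in>{2..<N - 2}. radial_increment N i) + radial_potential N (N - 2)"
    unfolding radial_potential_def using assms by (simp add: sum.atLeastLessThan_concat)
  moreover have "radial_potential N (N - 2) = radial_increment N (N - 2) + 1"
    using radial_potential_Suc[of "N - 2" N] radial_potential_Suc[of "N - 1" N]
      radial_increment_last[of N] assms
    by (simp add: radial_potential_eq_0 Suc_diff_Suc numeral_2_eq_2)
  ultimately show ?thesis by simp
qed

text \<open>The increments at \<open>i = 1\<close> and \<open>i = N - 2\<close> are \<open>O(2^N/N)\<close>, and the remaining \<open>N - 4\<close>
  are \<open>O(2^N/N^2)\<close> each.\<close>
lemma radial_potential_1_le:
  assumes N: "5 \<le> N"
  shows "radial_potential N 1 \<le> 6 * 2 ^ N / real N"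
proof -
  let ?r = "radial_increment N"
  define q where "q = 2 ^ N / (real N - 1)"
  have N_real: "5 \<le> real N" using N by simp
  have "?r 1 \<le> q" using radial_increment_le[of N 1] N by (simp add: q_def of_nat_diff)
  moreover have "?r (N - 2) \<le> q"
  proof -
    have "(N - 1) choose (N - 2) = N - 1"
      using N binomial_symmetric[of 1 "N - 1"] by (simp add: numeral_2_eq_2)
    thus ?thesis using radial_increment_le[of N "N - 2"] N by (simp add: q_def of_nat_diff)
  qed
  moreover have "(\<Sum>i\<in>{2..<N - 2}. ?r i) \<le> 2 * q"
  proof -
    have "(\<Sum>i\<in>{2..<N - 2}. ?r i)
        \<le> of_nat (card {2..<N - 2}) * (2 * 2 ^ N / ((real N - 1) * (real N - 2)))"
      by (rule sum_bounded_above) (use radial_increment_le_middle in auto)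
    also have "\<dots> \<le> (real N - 2) * (2 * 2 ^ N / ((real N - 1) * (real N - 2)))"
      using N_real by (intro mult_right_mono) auto
    also have "\<dots> = 2 * q" using N_real by (simp add: q_def)
    finally show ?thesis .
  qed
  moreover have "4 * q \<le> 5 * 2 ^ N / real N"
  proof -
    have "2 ^ N * (4 * real N) \<le> 2 ^ N * (5 * (real N - 1))"
      using N_real by (intro mult_left_mono) auto
    thus ?thesis using N_real by (simp add: q_def divide_simps mult_ac)
  qed
  moreover have "1 \<le> 2 ^ N / real N"
    using N_real of_nat_less_two_power[of N] by (simp add: divide_simps)
  moreover have "5 * 2 ^ N / real N + 2 ^ N / real N = 6 * 2 ^ N / (real N :: real)"
    by (simp add: add_divide_distrib[symmetric])
  ultimately show ?thesis using radial_potential_1_eq[OF N] by linarith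
qed

lemma radial_potential_ratio:
  assumes "5 \<le> N"
  shows "2 * radial_potential N 1 / radial_potential N 0 \<le> 24 / real N"
proof -
  have "(2::real) \<le> 2 ^ N" using power_increasing[of 1 N "2::real"] assms by simp
  hence "2 ^ N / 2 \<le> radial_potential N 0" using radial_potential_0_ge[of N] by linarith
  hence "2 * radial_potential N 1 / radial_potential N 0 \<le> 2 * (6 * 2 ^ N / real N) / (2 ^ N / 2)"
    by (intro frac_le) (use radial_potential_1_le[OF assms] radial_potential_nonneg in auto)
  also have "\<dots> = 24 / real N" by simp
  finally show ?thesis .
qed

section \<open>Neighbours in the hypercube\<close>

lemma finite_cube [simp]: "finite (cube N)"
  by (simp add: cube_def)

definition flip :: "nat set \<Rightarrow> nat \<Rightarrow> nat set" where
  "flip x i = sym_diff x {i}"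

lemma sym_diff_flip: "sym_diff x (flip x i) = {i}"
  by (auto simp: flip_def)

lemma flip_in_cube: "x \<in> cube N \<Longrightarrow> i < N \<Longrightarrow> flip x i \<in> cube N"
  by (auto simp: cube_def flip_def)

lemma sym_diff_subset_cube: "x \<in> cube N \<Longrightarrow> y \<in> cube N \<Longrightarrow> sym_diff x y \<subseteq> {..<N}"
  by (auto simp: cube_def)

lemma hamming_le: "x \<in> cube N \<Longrightarrow> y \<in> cube N \<Longrightarrow> hamming x y \<le> N"
  unfolding hamming_def using card_mono[OF _ sym_diff_subset_cube] by fastforce

lemma hamming_pos: "x \<in> cube N \<Longrightarrow> y \<in> cube N \<Longrightarrow> x \<noteq> y \<Longrightarrow> 1 \<le> hamming x y"
  unfolding hamming_def using finite_subset[OF sym_diff_subset_cube]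
  by (fastforce simp: Suc_le_eq card_gt_0_iff)

lemma bij_betw_flip_neighbours:
  assumes x: "x \<in> cube N"
  shows "bij_betw (flip x) {..<N} {y \<in> cube N. hamming x y = 1}"
proof (rule bij_betw_imageI)
  show "inj_on (flip x) {..<N}"
    by (rule inj_onI) (metis sym_diff_flip singleton_inject)
  show "flip x ` {..<N} = {y \<in> cube N. hamming x y = 1}"
  proof
    show "flip x ` {..<N} \<subseteq> {y \<in> cube N. hamming x y = 1}"
    proof (rule image_subsetI)
      fix i assume "i \<in> {..<N}"
      thus "flip x i \<in> {y \<in> cube N. hamming x y = 1}"
        using x by (simp add: flip_in_cube hamming_def sym_diff_flip)
    qed
  next
    show "{y \<in> cube N. hamming x y = 1} \<subseteq> flip x ` {..<N}"
    proof
      fix y assume y: "y \<in> {y \<in> cube N. hamming x y = 1}"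
      then obtain i where i: "sym_diff x y = {i}" by (auto simp: hamming_def card_1_singleton_iff)
      hence "y = flip x i" unfolding flip_def by blast
      moreover have "i < N" using sym_diff_subset_cube[OF x] y i by auto
      ultimately show "y \<in> flip x ` {..<N}" by blast
    qed
  qed
qed

lemma sum_trans_prob:
  assumes "x \<in> cube N"
  shows "(\<Sum>y\<in>cube N. trans_prob N x y * u y) = (\<Sum>i<N. u (flip x i)) / real N"
proof -
  have "(\<Sum>y\<in>cube N. trans_prob N x y * u y) = (\<Sum>y\<in>{y \<in> cube N. hamming x y = 1}. u y / real N)"
    unfolding trans_prob_def by (simp add: sum.inter_filter) (rule sum.cong, auto)
  also have "\<dots> = (\<Sum>i<N. u (flip x i) / real N)"
    using sum.reindex_bij_betw[OF bij_betw_flip_neighbours[OF assms], of "\<lambda>y. u y / real N"] by simp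
  finally show ?thesis by (simp add: sum_divide_distrib)
qed

lemma sum_trans_prob_eq_1: "x \<in> cube N \<Longrightarrow> 1 \<le> N \<Longrightarrow> (\<Sum>y\<in>cube N. trans_prob N x y) = 1"
  using sum_trans_prob[of x N "\<lambda>_. 1"] by simp

lemma trans_prob_nonneg: "0 \<le> trans_prob N x y"
  by (simp add: trans_prob_def)

lemma hamming_flip:
  assumes "finite (sym_diff x b)"
  shows "hamming (flip x i) b = (if i \<in> sym_diff x b then hamming x b - 1 else hamming x b + 1)"
proof -
  have "sym_diff (flip x i) b
      = (if i \<in> sym_diff x b then sym_diff x b - {i} else insert i (sym_diff x b))"
    by (auto simp: flip_def)
  thus ?thesis using assms by (simp add: hamming_def)
qed

lemma sum_flip_radial:
  assumes x: "x \<in> cube N" and b: "b \<in> cube N"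
  shows "(\<Sum>i<N. f (hamming (flip x i) b)) =
     real (hamming x b) * f (hamming x b - 1) + real (N - hamming x b) * f (hamming x b + 1)"
proof -
  let ?D = "sym_diff x b"
  have sub: "?D \<subseteq> {..<N}" using sym_diff_subset_cube[OF x b] .
  have fin: "finite ?D" using sub finite_subset by blast
  have "(\<Sum>i<N. f (hamming (flip x i) b))
      = (\<Sum>i<N. if i \<in> ?D then f (hamming x b - 1) else f (hamming x b + 1))"
    by (rule sum.cong) (simp_all add: hamming_flip[OF fin])
  also have "\<dots> = (\<Sum>i\<in>?D. f (hamming x b - 1)) + (\<Sum>i\<in>{..<N} - ?D. f (hamming x b + 1))"
  proof -
    have "{..<N} \<inter> {i. i \<in> ?D} = ?D" "{..<N} \<inter> - {i. i \<in> ?D} = {..<N} - ?D"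
      using sub by auto
    thus ?thesis by (simp only: sum.If_cases[OF finite_lessThan])
  qed
  also have "\<dots> = real (hamming x b) * f (hamming x b - 1) + real (N - hamming x b) * f (hamming x b + 1)"
    using sub fin by (simp add: card_Diff_subset hamming_def)
  finally show ?thesis .
qed

lemma radial_potential_harmonic:
  assumes x: "x \<in> cube N" and b: "b \<in> cube N" and "x \<noteq> b"
  shows "(\<Sum>y\<in>cube N. trans_prob N x y * radial_potential N (hamming y b))
    = radial_potential N (hamming x b) + 1"
proof -
  let ?d = "hamming x b"
  have d: "1 \<le> ?d" "?d \<le> N" using hamming_pos[OF x b] hamming_le[OF x b] assms by auto
  have "(\<Sum>y\<in>cube N. trans_prob N x y * radial_potential N (hamming y b))
     = (real ?d * radial_potential N (?d - 1) + real (N - ?d) * radial_potential N (?d + 1)) / real N"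
    using sum_trans_prob[OF x] sum_flip_radial[OF x b] by simp
  also have "\<dots> = radial_potential N ?d + 1" using radial_potential_rec[OF d] d by simp
  finally show ?thesis .
qed

section \<open>The walk killed on entering A\<close>

lemma avoid_prob_nonneg: "0 \<le> avoid_prob N B s n y"
  by (induction n arbitrary: y) (auto intro!: sum_nonneg mult_nonneg_nonneg trans_prob_nonneg)

locale killed_walk =
  fixes N :: nat and A :: "nat set set" and s :: "nat set"
  assumes A_subset: "A \<subseteq> cube N" and A_nonempty: "A \<noteq> {}"
    and start_in_cube: "s \<in> cube N" and start_notin: "s \<notin> A"
begin

lemma N_pos: "1 \<le> N"
proof (rule ccontr)
  assume "\<not> 1 \<le> N"
  hence "N = 0" by simp
  hence "cube N = {{}}" by (simp add: cube_def)
  thus False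
    using A_subset A_nonempty start_in_cube start_notin by (auto simp: subset_singleton_iff)
qed

lemma finite_A: "finite A"
  by (rule finite_subset[OF A_subset]) simp

abbreviation killed :: "nat \<Rightarrow> nat set \<Rightarrow> real" where
  "killed n x \<equiv> avoid_prob N A s n x"

text \<open>\<^term>\<open>entrance n a\<close> is the probability that the walk enters \<open>A\<close> for the first time at
  time \<open>n + 1\<close>, and does so at \<open>a\<close>.\<close>
definition entrance :: "nat \<Rightarrow> nat set \<Rightarrow> real" where
  "entrance n a = (\<Sum>x\<in>cube N. killed n x * trans_prob N x a)"

definition survival :: "nat \<Rightarrow> real" where
  "survival n = (\<Sum>x\<in>cube N. killed n x)"

definition potential_mass :: "nat set \<Rightarrow> nat \<Rightarrow> real" where
  "potential_mass b n = (\<Sum>x\<in>cube N. killed n x * radial_potential N (hamming x b))"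

definition harmonic_measure :: "nat set \<Rightarrow> real" where
  "harmonic_measure a = (\<Sum>n. entrance n a)"

lemma killed_in_A: "x \<in> A \<Longrightarrow> killed n x = 0"
  using start_notin by (cases n) auto

lemma entrance_nonneg: "0 \<le> entrance n a"
  unfolding entrance_def
  by (auto intro!: sum_nonneg mult_nonneg_nonneg avoid_prob_nonneg trans_prob_nonneg)

lemma survival_nonneg: "0 \<le> survival n"
  unfolding survival_def by (auto intro!: sum_nonneg avoid_prob_nonneg)

lemma potential_mass_nonneg: "0 \<le> potential_mass b n"
  unfolding potential_mass_def
  by (auto intro!: sum_nonneg mult_nonneg_nonneg avoid_prob_nonneg radial_potential_nonneg)

lemma sum_killed_Suc:
  "(\<Sum>y\<in>cube N. killed (Suc n) y * u y) =
   (\<Sum>x\<in>cube N. killed n x * (\<Sum>y\<in>cube N. trans_prob N x y * u y)) - (\<Sum>a\<in>A. entrance n a * u a)"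
proof -
  let ?g = "\<lambda>y. (\<Sum>x\<in>cube N. killed n x * trans_prob N x y) * u y"
  have swap: "(\<Sum>y\<in>cube N. ?g y) = (\<Sum>x\<in>cube N. killed n x * (\<Sum>y\<in>cube N. trans_prob N x y * u y))"
    unfolding sum_distrib_left sum_distrib_right by (subst sum.swap) (simp add: mult.assoc)
  have "(\<Sum>y\<in>cube N. killed (Suc n) y * u y) = (\<Sum>y\<in>cube N. if y \<in> A then 0 else ?g y)"
    by (rule sum.cong) auto
  also have "\<dots> = (\<Sum>y\<in>cube N - A. ?g y)"
    by (simp add: sum.If_cases Diff_eq)
  also have "\<dots> = (\<Sum>y\<in>cube N. ?g y) - (\<Sum>a\<in>A. entrance n a * u a)"
    using sum.subset_diff[OF A_subset finite_cube, of ?g] by (simp add: entrance_def)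
  finally show ?thesis unfolding swap .
qed

lemma survival_Suc: "survival (Suc n) = survival n - (\<Sum>a\<in>A. entrance n a)"
  using sum_killed_Suc[of n "\<lambda>_. 1"] sum_trans_prob_eq_1[OF _ N_pos]
  by (simp add: survival_def)

lemma survival_eq: "survival n = 1 - (\<Sum>m<n. \<Sum>a\<in>A. entrance m a)"
proof (induction n)
  case 0
  show ?case using start_in_cube by (simp add: survival_def)
next
  case (Suc n)
  thus ?case by (simp add: survival_Suc)
qed

lemma sum_entrance_le_1: "(\<Sum>m<n. \<Sum>a\<in>A. entrance m a) \<le> 1"
  using survival_eq[of n] survival_nonneg[of n] by simp

lemma survival_le_1: "survival n \<le> 1"
  using survival_eq[of n] by (simp add: sum_nonneg entrance_nonneg)

text \<open>\<open>radial_potential N (hamming X\<^sub>n b) - n\<close> is a martingale as long as the walk avoids \<open>b\<close>.\<close>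
lemma potential_mass_Suc:
  assumes b: "b \<in> A"
  shows "potential_mass b (Suc n)
    = potential_mass b n + survival n - (\<Sum>a\<in>A. entrance n a * radial_potential N (hamming a b))"
proof -
  have "killed n x * (\<Sum>y\<in>cube N. trans_prob N x y * radial_potential N (hamming y b))
      = killed n x * radial_potential N (hamming x b) + killed n x" if x: "x \<in> cube N" for x
  proof (cases "x \<in> A")
    case True thus ?thesis using killed_in_A by simp
  next
    case False
    hence "x \<noteq> b" using b by auto
    moreover have "b \<in> cube N" using b A_subset by auto
    ultimately show ?thesis using radial_potential_harmonic[OF x] by (simp add: algebra_simps)
  qed
  thus ?thesis using sum_killed_Suc[of n "\<lambda>y. radial_potential N (hamming y b)"]
    by (simp add: potential_mass_def survival_def sum.distrib)
qed

lemma potential_mass_eq: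
  assumes "b \<in> A"
  shows "potential_mass b n = radial_potential N (hamming s b) + (\<Sum>m<n. survival m)
    - (\<Sum>m<n. \<Sum>a\<in>A. entrance m a * radial_potential N (hamming a b))"
proof (induction n)
  case 0
  have "potential_mass b 0 = (\<Sum>x\<in>cube N. if x = s then radial_potential N (hamming x b) else 0)"
    unfolding potential_mass_def by (rule sum.cong) auto
  thus ?case using start_in_cube by simp
next
  case (Suc n)
  thus ?case by (simp add: potential_mass_Suc[OF assms])
qed

lemma potential_mass_le: "potential_mass b n \<le> radial_potential N 0 * survival n"
  unfolding potential_mass_def survival_def sum_distrib_left
  by (rule sum_mono) (auto simp: mult.commute intro!: mult_right_mono radial_potential_antimono avoid_prob_nonneg)

lemma sum_survival_le: "(\<Sum>m<n. survival m) \<le> 2 * radial_potential N 0"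
proof -
  obtain b where b: "b \<in> A" using A_nonempty by blast
  let ?G = "radial_potential N 0"
  have "(\<Sum>m<n. \<Sum>a\<in>A. entrance m a * radial_potential N (hamming a b))
      \<le> (\<Sum>m<n. \<Sum>a\<in>A. entrance m a * ?G)"
    by (intro sum_mono mult_left_mono radial_potential_antimono entrance_nonneg) simp
  also have "\<dots> = (\<Sum>m<n. \<Sum>a\<in>A. entrance m a) * ?G"
    by (simp add: sum_distrib_right)
  also have "\<dots> \<le> ?G"
    using sum_entrance_le_1[of n]
    by (intro mult_left_le_one_le radial_potential_nonneg sum_nonneg entrance_nonneg)
  finally have "(\<Sum>m<n. \<Sum>a\<in>A. entrance m a * radial_potential N (hamming a b)) \<le> ?G" .
  moreover have "potential_mass b n \<le> ?G"
    using potential_mass_le[of b n] survival_le_1[of n] radial_potential_nonneg[of N 0]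
    by (meson mult_left_le order_trans)
  ultimately show ?thesis
    using potential_mass_eq[OF b, of n] radial_potential_nonneg[of N "hamming s b"] by linarith
qed

lemma summable_survival: "summable survival"
  by (rule summableI_nonneg_bounded[OF survival_nonneg sum_survival_le])

lemma potential_mass_tendsto_0: "(\<lambda>n. potential_mass b n) \<longlonglongrightarrow> 0"
proof (rule tendsto_sandwich[of "\<lambda>_. 0" _ _ "\<lambda>n. radial_potential N 0 * survival n"])
  show "(\<lambda>n. radial_potential N 0 * survival n) \<longlonglongrightarrow> 0"
    using tendsto_mult_right_zero[OF summable_LIMSEQ_zero[OF summable_survival]] by simp
qed (simp_all add: potential_mass_nonneg potential_mass_le)

lemma summable_entrance:
  assumes "a \<in> A" shows "summable (\<lambda>m. entrance m a)"
proof (rule summableI_nonneg_bounded[OF entrance_nonneg])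
  fix n
  have "(\<Sum>m<n. entrance m a) \<le> (\<Sum>m<n. \<Sum>a\<in>A. entrance m a)"
    by (intro sum_mono member_le_sum[OF assms] entrance_nonneg finite_A)
  thus "(\<Sum>m<n. entrance m a) \<le> 1" using sum_entrance_le_1[of n] by simp
qed

lemma harmonic_measure_nonneg: "a \<in> A \<Longrightarrow> 0 \<le> harmonic_measure a"
  unfolding harmonic_measure_def by (intro suminf_nonneg summable_entrance entrance_nonneg)

lemma tendsto_weighted_entrance:
  "(\<lambda>n. \<Sum>a\<in>A. c a * (\<Sum>m<n. entrance m a)) \<longlonglongrightarrow> (\<Sum>a\<in>A. c a * harmonic_measure a)"
  unfolding harmonic_measure_def
  by (intro tendsto_sum tendsto_mult_left summable_LIMSEQ summable_entrance)

lemma harmonic_measure_sum: "(\<Sum>a\<in>A. harmonic_measure a) = 1"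
proof -
  have "(\<Sum>a\<in>A. 1 * (\<Sum>m<n. entrance m a)) = 1 - survival n" for n
  proof -
    have "(\<Sum>a\<in>A. \<Sum>m<n. entrance m a) = (\<Sum>m<n. \<Sum>a\<in>A. entrance m a)"
      by (rule sum.swap)
    thus ?thesis using survival_eq[of n] by simp
  qed
  hence "(\<lambda>n. 1 - survival n) \<longlonglongrightarrow> (\<Sum>a\<in>A. harmonic_measure a)"
    using tendsto_weighted_entrance[of "\<lambda>_. 1"] by simp
  moreover have "(\<lambda>n. 1 - survival n) \<longlonglongrightarrow> 1 - 0"
    by (intro tendsto_intros summable_LIMSEQ_zero summable_survival)
  ultimately show ?thesis by (simp add: LIMSEQ_unique)
qed

text \<open>Optional stopping at the hitting time of \<open>A\<close>; \<^term>\<open>\<Sum>n. survival n\<close> is the mean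
  hitting time of \<open>A\<close>.\<close>
lemma harmonic_measure_potential:
  assumes b: "b \<in> A"
  shows "(\<Sum>a\<in>A. radial_potential N (hamming a b) * harmonic_measure a)
    = (\<Sum>n. survival n) + radial_potential N (hamming s b)"
proof -
  let ?\<phi> = "\<lambda>a. radial_potential N (hamming a b)"
  have "(\<Sum>a\<in>A. ?\<phi> a * (\<Sum>m<n. entrance m a))
      = radial_potential N (hamming s b) + (\<Sum>m<n. survival m) - potential_mass b n" for n
  proof -
    have "(\<Sum>a\<in>A. ?\<phi> a * (\<Sum>m<n. entrance m a)) = (\<Sum>a\<in>A. \<Sum>m<n. entrance m a * ?\<phi> a)"
      by (simp add: sum_distrib_left mult.commute)
    also have "\<dots> = (\<Sum>m<n. \<Sum>a\<in>A. entrance m a * ?\<phi> a)"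
      by (rule sum.swap)
    finally show ?thesis using potential_mass_eq[OF b, of n] by simp
  qed
  hence "(\<lambda>n. radial_potential N (hamming s b) + (\<Sum>m<n. survival m) - potential_mass b n)
      \<longlonglongrightarrow> (\<Sum>a\<in>A. ?\<phi> a * harmonic_measure a)"
    using tendsto_weighted_entrance[of ?\<phi>] by simp
  moreover have "(\<lambda>n. radial_potential N (hamming s b) + (\<Sum>m<n. survival m) - potential_mass b n)
      \<longlonglongrightarrow> radial_potential N (hamming s b) + (\<Sum>n. survival n) - 0"
    by (intro tendsto_intros summable_LIMSEQ summable_survival potential_mass_tendsto_0)
  ultimately show ?thesis using LIMSEQ_unique by fastforce
qed

text \<open>In \<open>harmonic_measure_potential\<close> only the term \<open>a = b\<close> carries the large weight
  \<^term>\<open>radial_potential N 0\<close>; all other weights are at most \<^term>\<open>radial_potential N 1\<close>.\<close>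
lemma harmonic_measure_near_mean_time:
  assumes b: "b \<in> A"
  shows "\<bar>radial_potential N 0 * harmonic_measure b - (\<Sum>n. survival n)\<bar> \<le> radial_potential N 1"
proof -
  let ?\<phi> = "\<lambda>a. radial_potential N (hamming a b)"
  have far: "radial_potential N (hamming a b) \<le> radial_potential N 1" if "a \<in> cube N" "a \<noteq> b" for a
    using b A_subset that by (intro radial_potential_antimono hamming_pos) auto
  have "(\<Sum>a\<in>A. ?\<phi> a * harmonic_measure a)
      = radial_potential N 0 * harmonic_measure b + (\<Sum>a\<in>A - {b}. ?\<phi> a * harmonic_measure a)"
    using sum.remove[OF finite_A b, of "\<lambda>a. ?\<phi> a * harmonic_measure a"] by (simp add: hamming_def)
  moreover have "0 \<le> (\<Sum>a\<in>A - {b}. ?\<phi> a * harmonic_measure a)"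
    by (intro sum_nonneg mult_nonneg_nonneg radial_potential_nonneg harmonic_measure_nonneg) auto
  moreover have "(\<Sum>a\<in>A - {b}. ?\<phi> a * harmonic_measure a) \<le> radial_potential N 1"
  proof -
    have "(\<Sum>a\<in>A - {b}. ?\<phi> a * harmonic_measure a)
        \<le> (\<Sum>a\<in>A - {b}. radial_potential N 1 * harmonic_measure a)"
      using A_subset far by (intro sum_mono mult_right_mono harmonic_measure_nonneg) auto
    also have "\<dots> \<le> radial_potential N 1 * (\<Sum>a\<in>A. harmonic_measure a)"
      by (auto simp: sum_distrib_left[symmetric] finite_A harmonic_measure_nonneg
          intro!: mult_left_mono sum_mono2 radial_potential_nonneg)
    finally show ?thesis by (simp add: harmonic_measure_sum)
  qed
  moreover have "0 \<le> radial_potential N (hamming s b)" "radial_potential N (hamming s b) \<le> radial_potential N 1"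
    using far[OF start_in_cube] b start_notin radial_potential_nonneg by auto
  ultimately show ?thesis using harmonic_measure_potential[OF b] by linarith
qed

lemma harmonic_measure_near_uniform:
  assumes "\<eta> \<in> A"
  shows "\<bar>harmonic_measure \<eta> - 1 / real (card A)\<bar> \<le> 2 * radial_potential N 1 / radial_potential N 0"
proof -
  define G where "G = radial_potential N 0"
  define M where "M = radial_potential N 1"
  define E where "E = (\<Sum>n. survival n)"
  define k where "k = real (card A)"
  have k_pos: "0 < k" unfolding k_def using finite_A A_nonempty by (simp add: card_gt_0_iff)
  have G_pos: "0 < G"
    using radial_potential_0_ge[of N] power_increasing[of 1 N "2::real"] N_pos by (simp add: G_def)
  have near: "\<bar>G * harmonic_measure b - E\<bar> \<le> M" if "b \<in> A" for b
    using harmonic_measure_near_mean_time[OF that] by (simp add: G_def M_def E_def)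
  have "\<bar>G - k * E\<bar> = \<bar>\<Sum>b\<in>A. G * harmonic_measure b - E\<bar>"
    by (simp add: sum_subtractf sum_distrib_left[symmetric] harmonic_measure_sum k_def)
  also have "\<dots> \<le> (\<Sum>b\<in>A. \<bar>G * harmonic_measure b - E\<bar>)" by (rule sum_abs)
  also have "\<dots> \<le> k * M" using sum_mono[OF near] by (simp add: k_def)
  finally have "\<bar>G / k - E\<bar> \<le> M"
    using k_pos by (simp add: abs_le_iff field_simps)
  hence "\<bar>G * harmonic_measure \<eta> - G / k\<bar> \<le> 2 * M" using near[OF assms] by linarith
  moreover have "G * \<bar>harmonic_measure \<eta> - 1 / k\<bar> = \<bar>G * (harmonic_measure \<eta> - 1 / k)\<bar>"
    using G_pos by (simp add: abs_mult)
  moreover have "G * (harmonic_measure \<eta> - 1 / k) = G * harmonic_measure \<eta> - G / k"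
    by (simp add: right_diff_distrib)
  ultimately have "G * \<bar>harmonic_measure \<eta> - 1 / k\<bar> \<le> 2 * M" by simp
  thus ?thesis using G_pos by (simp add: G_def M_def k_def field_simps)
qed

end

lemma first_hit_prob_near_uniform:
  assumes "A \<subseteq> cube N" "\<sigma> \<in> cube N - A" "\<eta> \<in> A" "5 \<le> N"
  shows "\<bar>first_hit_prob N (A - {\<eta>}) \<sigma> \<eta> - 1 / real (card A)\<bar> \<le> 24 / real N"
proof -
  interpret killed_walk N A \<sigma> using assms by unfold_locales auto
  have "insert \<eta> (A - {\<eta>}) = A" using assms by auto
  hence "first_hit_prob N (A - {\<eta>}) \<sigma> \<eta> = harmonic_measure \<eta>"
    by (simp add: first_hit_prob_def harmonic_measure_def entrance_def)
  thus ?thesis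
    using harmonic_measure_near_uniform[OF assms(3)] radial_potential_ratio[OF assms(4)] by simp
qed

section \<open>Size of A\<close>

lemma ln_cube_le:
  assumes "1 \<le> x"
  shows "(ln x) ^ 3 \<le> 27 * (x::real)"
proof -
  have x: "0 < x" using assms by simp
  have "ln x = 3 * ln (x powr (1/3))" using x by simp
  moreover have "ln (x powr (1/3)) \<le> x powr (1/3)" using x by (intro less_imp_le ln_less_self) simp
  ultimately have "ln x \<le> 3 * x powr (1/3)" by linarith
  hence "(ln x) ^ 3 \<le> (3 * x powr (1/3)) ^ 3" using assms by (intro power_mono) auto
  also have "\<dots> = 27 * x" using x by (simp add: power_mult_distrib powr_power)
  finally show ?thesis .
qed

lemma card_le_two_ln_of_floor:
  fixes k N :: nat
  assumes k: "1 \<le> k" and floor: "(2::int) ^ k \<le> \<lfloor>1/10 * real N / ln (real N)\<rfloor>"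
  shows "10 \<le> N" "real k \<le> 2 * ln (real N)"
proof -
  define L where "L = ln (real N)"
  have "real_of_int (2 ^ k) \<le> 1/10 * real N / L" using floor unfolding L_def by (meson le_floor_iff)
  moreover have "(2::real) ^ 1 \<le> 2 ^ k" using k by (intro power_increasing) auto
  ultimately have N_large: "2 \<le> real N / (10 * L)" and pow_le: "2 ^ k \<le> 1/10 * real N / L"
    by simp_all
  have "2 \<le> N"
  proof (rule ccontr)
    assume "\<not> 2 \<le> N"
    hence "L = 0" unfolding L_def by (cases N) auto
    thus False using N_large by simp
  qed
  have ln2: "1/2 \<le> ln (2::real)" using exp_half_le2 by (subst ln_ge_iff) auto
  have "1/2 \<le> L"
  proof -
    note ln2
    also have "\<dots> \<le> L" unfolding L_def using \<open>2 \<le> N\<close> by simp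
    finally show ?thesis .
  qed
  hence "20 * L \<le> real N" using N_large by (simp add: field_simps)
  thus "10 \<le> N" using \<open>1/2 \<le> L\<close> by linarith
  have "real N * 1 \<le> real N * (10 * L)" using \<open>1/2 \<le> L\<close> by (intro mult_left_mono) auto
  hence "1/10 * real N / L \<le> real N" using \<open>1/2 \<le> L\<close> by (simp add: field_simps)
  hence "(2::real) ^ k \<le> real N" using pow_le by linarith
  hence "ln (2 ^ k) \<le> L" unfolding L_def by (intro ln_mono) auto
  hence "real k * ln 2 \<le> L" by (simp add: ln_realpow)
  moreover have "real k * (1/2) \<le> real k * ln 2" using ln2 by (intro mult_left_mono) auto
  ultimately show "real k \<le> 2 * ln (real N)" unfolding L_def by linarith
qed

lemma inverse_le_inverse_card_ln_squared:
  assumes k: "1 \<le> k" and kL: "real k \<le> 2 * ln (real N)" and N: "2 \<le> N"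
  shows "24 / real N \<le> 1300 / (real k * (ln (real N))\<^sup>2)"
proof -
  define L where "L = ln (real N)"
  have L_pos: "0 < L" using N by (simp add: L_def)
  have "real k * L\<^sup>2 \<le> (2 * L) * L\<^sup>2" using kL by (intro mult_right_mono) (auto simp: L_def)
  also have "\<dots> = 2 * L ^ 3" by (simp add: power2_eq_square power3_eq_cube)
  also have "\<dots> \<le> 54 * real N" using ln_cube_le[of "real N"] N by (simp add: L_def)
  finally show ?thesis using k L_pos N by (simp add: L_def[symmetric] field_simps)
qed

theorem corollary1p5:
  shows "\<exists>\<alpha>0 cm cp :: real. 0 < \<alpha>0 \<and> \<alpha>0 < 1 \<and> 0 < cm \<and> 0 < cp \<and>
    (\<forall>N :: nat. \<forall>A \<sigma> \<eta>.
       A \<noteq> {} \<and> A \<subseteq> cube N \<and>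
       (2::int) ^ card A \<le> \<lfloor>\<alpha>0 * real N / ln (real N)\<rfloor> \<and>
       \<sigma> \<in> cube N - A \<and> \<eta> \<in> A \<longrightarrow>
         (1 / real (card A)) * (1 - cm / (ln (real N))\<^sup>2)
            \<le> first_hit_prob N (A - {\<eta>}) \<sigma> \<eta> \<and>
         first_hit_prob N (A - {\<eta>}) \<sigma> \<eta>
            \<le> (1 / real (card A)) * (1 + cp / (ln (real N))\<^sup>2))"
proof (rule exI[of _ "1/10"], rule exI[of _ 1300], rule exI[of _ 1300], intro conjI allI impI)
  fix N :: nat and A \<sigma> \<eta>
  assume H: "A \<noteq> {} \<and> A \<subseteq> cube N \<and>
       (2::int) ^ card A \<le> \<lfloor>1/10 * real N / ln (real N)\<rfloor> \<and> \<sigma> \<in> cube N - A \<and> \<eta> \<in> A"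
  define k where "k = card A"
  define L where "L = ln (real N)"
  define p where "p = first_hit_prob N (A - {\<eta>}) \<sigma> \<eta>"
  have "finite A" using H finite_subset[of A "cube N"] by simp
  hence k: "1 \<le> k" using H by (simp add: k_def Suc_le_eq card_gt_0_iff)
  have N: "10 \<le> N" and kL: "real k \<le> 2 * L"
    using card_le_two_ln_of_floor[OF k] H by (simp_all add: k_def L_def)
  have L_pos: "0 < L" using N by (simp add: L_def)
  have "24 / real N \<le> 1300 / (real k * L\<^sup>2)"
    using inverse_le_inverse_card_ln_squared[OF k] kL N by (simp add: L_def)
  moreover have "\<bar>p - 1 / real k\<bar> \<le> 24 / real N"
    unfolding p_def k_def using H N by (intro first_hit_prob_near_uniform) auto
  ultimately have dev: "\<bar>p - 1 / real k\<bar> \<le> 1300 / (real k * L\<^sup>2)" by linarith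
  have "1 / real k * (1 - 1300 / L\<^sup>2) = 1 / real k - 1300 / (real k * L\<^sup>2)"
    "1 / real k * (1 + 1300 / L\<^sup>2) = 1 / real k + 1300 / (real k * L\<^sup>2)"
    using k L_pos by (simp_all add: field_simps)
  thus "1 / real (card A) * (1 - 1300 / (ln (real N))\<^sup>2) \<le> first_hit_prob N (A - {\<eta>}) \<sigma> \<eta>"
    and "first_hit_prob N (A - {\<eta>}) \<sigma> \<eta> \<le> 1 / real (card A) * (1 + 1300 / (ln (real N))\<^sup>2)"
    using abs_le_D1[OF dev] abs_le_D2[OF dev] unfolding p_def k_def L_def by linarith+
qed simp_all

end
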